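(* There exists $\epsilon_0>0$ such that, for all sufficiently large $a$ and all $\tau\in[0,1]$, every solution $(c,\mu)$ of the slab problem $P_{\tau,a}$ with $c=0$ satisfies $\nu(0)>\epsilon_0$.
   Context: $\Theta=(\theta_{\min},\theta_{\max})$, $0<\theta_{\min}<\theta_{\max}<\infty$, $|\Theta|=\theta_{\max}-\theta_{\min}$, $\alpha,r>0$. For $\tau\in[0,1]$, $g_\tau(\theta)=\theta_{\min}+\tau(\theta-\theta_{\min})$. Slab problem $P_{\tau,a}$: a pair $(c,\mu)$, $c\in\mathbb R$, $\mu\ge0$ of class $C^2$ on $[-a,a]\times\overline\Theta$, with $-c\mu_\xi-g_\tau(\theta)\mu_{\xi\xi}-\alpha\mu_{\theta\theta}=r\mu(1-\nu)$ on $(-a,a)\times\Theta$, $\mu_\theta(\xi,\theta_{\min})=\mu_\theta(\xi,\theta_{\max})=0$, $\mu(-a,\theta)=|\Theta|^{-1}$, $\mu(a,\theta)=0$, where $\nu(\xi)=\int_\Theta\mu(\xi,\theta)d\theta$. *)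

theory Defs
  imports "HOL-Analysis.Analysis"
begin

definition g_tau :: "real \<Rightarrow> real \<Rightarrow> real \<Rightarrow> real" where
  "g_tau tmin \<tau> \<theta> = tmin + \<tau> * (\<theta> - tmin)"

definition nu :: "(real \<Rightarrow> real \<Rightarrow> real) \<Rightarrow> real \<Rightarrow> real \<Rightarrow> real \<Rightarrow> real" where
  "nu \<mu> tmin tmax \<xi> = integral {tmin..tmax} (\<lambda>\<theta>. \<mu> \<xi> \<theta>)"

text \<open>(c, mu) solves the slab problem P_{tau,a}.  mu is C^2 on the closed rectangle
  [-a,a] x [tmin,tmax]: its first partial derivatives mx, mt and the second partial
  derivatives mxx, mxt, mtx, mtt exist (as derivatives within the closed rectangle)
  and are continuous there.\<close>
definition slab_solution ::
  "real \<Rightarrow> real \<Rightarrow> real \<Rightarrow> real \<Rightarrow> real \<Rightarrow> real \<Rightarrow> real \<Rightarrow> (real \<Rightarrow> real \<Rightarrow> real) \<Rightarrow> bool" where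
  "slab_solution tmin tmax \<alpha> r \<tau> a c \<mu> \<longleftrightarrow>
     (let S = {-a..a} \<times> {tmin..tmax} in
     (\<exists>mx mt mxx mxt mtx mtt :: real \<Rightarrow> real \<Rightarrow> real.
        (\<forall>p\<in>S. ((\<lambda>q. \<mu> (fst q) (snd q)) has_derivative
                   (\<lambda>h. mx (fst p) (snd p) * fst h + mt (fst p) (snd p) * snd h)) (at p within S))
      \<and> (\<forall>p\<in>S. ((\<lambda>q. mx (fst q) (snd q)) has_derivative
                   (\<lambda>h. mxx (fst p) (snd p) * fst h + mxt (fst p) (snd p) * snd h)) (at p within S))
      \<and> (\<forall>p\<in>S. ((\<lambda>q. mt (fst q) (snd q)) has_derivative
                   (\<lambda>h. mtx (fst p) (snd p) * fst h + mtt (fst p) (snd p) * snd h)) (at p within S))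
      \<and> continuous_on S (\<lambda>q. \<mu> (fst q) (snd q))
      \<and> continuous_on S (\<lambda>q. mx (fst q) (snd q))
      \<and> continuous_on S (\<lambda>q. mt (fst q) (snd q))
      \<and> continuous_on S (\<lambda>q. mxx (fst q) (snd q))
      \<and> continuous_on S (\<lambda>q. mxt (fst q) (snd q))
      \<and> continuous_on S (\<lambda>q. mtx (fst q) (snd q))
      \<and> continuous_on S (\<lambda>q. mtt (fst q) (snd q))
      \<and> (\<forall>\<xi>\<in>{-a<..<a}. \<forall>\<theta>\<in>{tmin<..<tmax}.
           - c * mx \<xi> \<theta> - g_tau tmin \<tau> \<theta> * mxx \<xi> \<theta> - \<alpha> * mtt \<xi> \<theta>
             = r * \<mu> \<xi> \<theta> * (1 - nu \<mu> tmin tmax \<xi>))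
      \<and> (\<forall>\<xi>\<in>{-a..a}. mt \<xi> tmin = 0 \<and> mt \<xi> tmax = 0))
     \<and> (\<forall>p\<in>S. \<mu> (fst p) (snd p) \<ge> 0)
     \<and> (\<forall>\<theta>\<in>{tmin..tmax}. \<mu> (-a) \<theta> = 1 / (tmax - tmin) \<and> \<mu> a \<theta> = 0))"

end

theory Submission
  imports Defs
begin

text \<open>Integrating the equation against the weight \<open>g_tau\<close> removes the \<open>\<theta>\<close>-diffusion (by the
  Neumann condition) and leaves the ODE \<open>w'' = - r \<nu> (1 - \<nu>)\<close> for the weighted mass
  \<open>w(\<xi>) = \<integral> g_tau(\<theta>) \<mu>(\<xi>,\<theta>) d\<theta>\<close>. Since \<open>tmin \<nu> \<le> w \<le> tmax \<nu>\<close>, the function \<open>w\<close> is concave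
  wherever \<open>w < tmin\<close>; with \<open>w(-a) \<ge> tmin\<close> and \<open>w(a) = 0\<close> a maximum principle keeps \<open>w\<close> above
  the chord through these boundary values. Hence \<open>w(0) \<ge> tmin/2\<close> and \<open>\<nu>(0) \<ge> tmin/(2 tmax)\<close>,
  for every \<open>a > 0\<close> and \<open>\<tau> \<in> [0,1]\<close>.\<close>

lemma first_nonneg_point_after:
  fixes h :: "real \<Rightarrow> real"
  assumes "m \<le> b" and cont: "continuous_on {m..b} h" and "h m < 0" and "h b \<ge> 0"
  obtains q where "m < q" "q \<le> b" "h q \<ge> 0" "\<And>y. m \<le> y \<Longrightarrow> y < q \<Longrightarrow> h y < 0"
proof -
  define Q where "Q = {m..b} \<inter> h -` {0..}"
  have "closed Q"
    unfolding Q_def by (rule continuous_closed_preimage[OF cont]) auto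
  moreover have "b \<in> Q" and bdd: "bdd_below Q"
    using assms unfolding Q_def by (auto intro: bdd_belowI[where m=m])
  ultimately have "Inf Q \<in> Q"
    using closed_contains_Inf by blast
  moreover have "h y < 0" if "m \<le> y" "y < Inf Q" for y
  proof (rule ccontr)
    assume "\<not> h y < 0"
    with that \<open>Inf Q \<in> Q\<close> have "y \<in> Q" unfolding Q_def by auto
    with bdd that show False by (simp add: cInf_lower leD)
  qed
  ultimately show ?thesis
    using that[of "Inf Q"] \<open>h m < 0\<close> unfolding Q_def by force
qed

text \<open>At a negative interior minimum \<open>h' = 0\<close>; concavity up to the first later point where
  \<open>h \<ge> 0\<close> keeps \<open>h' \<le> 0\<close> there, so \<open>h\<close> cannot climb back.\<close>

lemma nonneg_if_concave_where_negative:
  fixes h h' h'' :: "real \<Rightarrow> real"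
  assumes cont: "continuous_on {a..b} h"
    and h': "\<And>x. x \<in> {a<..<b} \<Longrightarrow> (h has_real_derivative h' x) (at x)"
    and h'': "\<And>x. x \<in> {a<..<b} \<Longrightarrow> (h' has_real_derivative h'' x) (at x)"
    and concave: "\<And>x. x \<in> {a<..<b} \<Longrightarrow> h x < 0 \<Longrightarrow> h'' x \<le> 0"
    and "h a \<ge> 0" "h b \<ge> 0" "x \<in> {a..b}"
  shows "h x \<ge> 0"
proof (rule ccontr)
  assume "\<not> h x \<ge> 0"
  obtain m where m: "m \<in> {a..b}" and min: "\<forall>y\<in>{a..b}. h m \<le> h y"
    using continuous_attains_inf[OF compact_Icc _ cont] \<open>x \<in> {a..b}\<close> by auto
  have hm: "h m < 0"
    using min \<open>\<not> h x \<ge> 0\<close> \<open>x \<in> {a..b}\<close> by fastforce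
  with \<open>h a \<ge> 0\<close> \<open>h b \<ge> 0\<close> m have m_in: "m \<in> {a<..<b}"
    by (cases "m = a"; cases "m = b") auto
  have h'm: "h' m = 0"
  proof (rule DERIV_local_min[OF h'[OF m_in]])
    show "0 < min (m - a) (b - m)" using m_in by auto
    show "\<forall>y. \<bar>m - y\<bar> < min (m - a) (b - m) \<longrightarrow> h m \<le> h y"
      using min by (auto simp: abs_if split: if_splits)
  qed
  obtain q where q: "m < q" "q \<le> b" "h q \<ge> 0" and neg: "\<And>y. m \<le> y \<Longrightarrow> y < q \<Longrightarrow> h y < 0"
    using first_nonneg_point_after[OF _ continuous_on_subset[OF cont] hm \<open>h b \<ge> 0\<close>] m by auto
  obtain z where z: "m < z" "z < q" and mvt: "h q - h m = (q - m) * h' z"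
  proof -
    have "\<forall>y. m < y \<and> y < q \<longrightarrow> h differentiable (at y)"
    proof (intro allI impI)
      fix y assume "m < y \<and> y < q"
      with m_in q have "y \<in> {a<..<b}" by auto
      then show "h differentiable (at y)" using h' real_differentiable_def by blast
    qed
    then obtain L z where "m < z" "z < q" "DERIV h z :> L" "h q - h m = (q - m) * L"
      using MVT[OF \<open>m < q\<close> continuous_on_subset[OF cont]] m_in q by fastforce
    moreover have "z \<in> {a<..<b}" using calculation m_in q by auto
    ultimately show thesis using that DERIV_unique h' by blast
  qed
  have "h' z \<le> h' m"
  proof (rule DERIV_nonpos_imp_nonincreasing[of m z h'])
    fix y assume "m \<le> y" "y \<le> z"
    with m_in z q have "y \<in> {a<..<b}" "h y < 0" using neg by auto
    then show "\<exists>d. DERIV h' y :> d \<and> d \<le> 0" using h'' concave by blast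
  qed (use z in simp)
  with h'm z have "(q - m) * h' z \<le> 0"
    by (simp add: mult_nonneg_nonpos)
  with mvt have "h q \<le> h m" by simp
  with hm q show False by simp
qed

lemma has_real_derivative_fst_slice:
  fixes f fx ft :: "real \<Rightarrow> real \<Rightarrow> real"
  assumes "\<forall>p\<in>A\<times>B. ((\<lambda>q. f (fst q) (snd q)) has_derivative
        (\<lambda>h. fx (fst p) (snd p) * fst h + ft (fst p) (snd p) * snd h)) (at p within A\<times>B)"
    and "x \<in> A" and "t \<in> B"
  shows "((\<lambda>x. f x t) has_real_derivative fx x t) (at x within A)"
proof -
  have "((\<lambda>q. f (fst q) (snd q)) has_derivative (\<lambda>h. fx x t * fst h + ft x t * snd h))
      (at (x, t) within (\<lambda>x. (x, t)) ` A)"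
    using assms by (auto intro: has_derivative_subset)
  moreover have "((\<lambda>x. (x, t)) has_derivative (\<lambda>h. (h, 0))) (at x within A)"
    by (auto intro!: derivative_eq_intros)
  ultimately show ?thesis
    using has_derivative_in_compose unfolding has_field_derivative_def by fastforce
qed

lemma has_real_derivative_snd_slice:
  fixes f fx ft :: "real \<Rightarrow> real \<Rightarrow> real"
  assumes "\<forall>p\<in>A\<times>B. ((\<lambda>q. f (fst q) (snd q)) has_derivative
        (\<lambda>h. fx (fst p) (snd p) * fst h + ft (fst p) (snd p) * snd h)) (at p within A\<times>B)"
    and "x \<in> A" and "t \<in> B"
  shows "((\<lambda>t. f x t) has_real_derivative ft x t) (at t within B)"
proof -
  have "((\<lambda>q. f (fst q) (snd q)) has_derivative (\<lambda>h. fx x t * fst h + ft x t * snd h))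
      (at (x, t) within (\<lambda>t. (x, t)) ` B)"
    using assms by (auto intro: has_derivative_subset)
  moreover have "((\<lambda>t. (x, t)) has_derivative (\<lambda>h. (0, h))) (at t within B)"
    by (auto intro!: derivative_eq_intros)
  ultimately show ?thesis
    using has_derivative_in_compose unfolding has_field_derivative_def by fastforce
qed

lemma continuous_on_slice:
  fixes f :: "real \<Rightarrow> real \<Rightarrow> real"
  assumes "continuous_on (A\<times>B) (\<lambda>q. f (fst q) (snd q))" and "x \<in> A"
  shows "continuous_on B (f x)"
  by (rule continuous_on_compose2[OF assms(1), where f="\<lambda>t. (x, t)", simplified])
     (use assms(2) in \<open>auto intro!: continuous_intros\<close>)

lemma continuous_on_weighted:
  fixes f :: "real \<Rightarrow> real \<Rightarrow> real" and G :: "real \<Rightarrow> real"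
  assumes "continuous_on (A\<times>B) (\<lambda>q. f (fst q) (snd q))" and "continuous_on B G" and "U \<subseteq> A"
  shows "continuous_on (U\<times>B) (\<lambda>(x, t). G t * f x t)"
proof -
  have "continuous_on (U\<times>B) (\<lambda>q. G (snd q) * f (fst q) (snd q))"
  proof (intro continuous_on_mult)
    show "continuous_on (U\<times>B) (\<lambda>q. G (snd q))"
      by (rule continuous_on_compose2[OF assms(2)]) (auto intro!: continuous_intros)
    show "continuous_on (U\<times>B) (\<lambda>q. f (fst q) (snd q))"
      by (rule continuous_on_subset[OF assms(1)]) (use assms(3) in auto)
  qed
  then show ?thesis by (simp add: case_prod_beta)
qed

lemma weighted_integral_has_real_derivative:
  fixes f fx :: "real \<Rightarrow> real \<Rightarrow> real" and G :: "real \<Rightarrow> real"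
  assumes d: "\<And>x t. x \<in> {a..b} \<Longrightarrow> t \<in> {c..d} \<Longrightarrow>
      ((\<lambda>x. f x t) has_real_derivative fx x t) (at x within {a..b})"
    and cf: "continuous_on ({a..b}\<times>{c..d}) (\<lambda>q. f (fst q) (snd q))"
    and cfx: "continuous_on ({a..b}\<times>{c..d}) (\<lambda>q. fx (fst q) (snd q))"
    and cG: "continuous_on {c..d} G"
    and x0: "x0 \<in> {a<..<b}"
  shows "((\<lambda>x. integral {c..d} (\<lambda>t. G t * f x t)) has_real_derivative
      integral {c..d} (\<lambda>t. G t * fx x0 t)) (at x0)"
proof -
  have "((\<lambda>x. integral (cbox c d) (\<lambda>t. G t * f x t)) has_real_derivative
      integral (cbox c d) (\<lambda>t. G t * fx x0 t)) (at x0 within {a<..<b})"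
  proof (rule leibniz_rule_field_derivative)
    fix x t assume "x \<in> {a<..<b}" "t \<in> cbox c d"
    then have "((\<lambda>x. f x t) has_real_derivative fx x t) (at x within {a<..<b})"
      by (intro has_field_derivative_subset[OF d]) auto
    then show "((\<lambda>x. G t * f x t) has_real_derivative G t * fx x t) (at x within {a<..<b})"
      by (auto intro!: derivative_eq_intros)
  next
    fix x assume "x \<in> {a<..<b}"
    then have "continuous_on {c..d} (\<lambda>t. G t * f x t)"
      by (intro continuous_on_mult cG continuous_on_slice[OF cf]) auto
    then show "(\<lambda>t. G t * f x t) integrable_on cbox c d"
      by (simp add: integrable_continuous_interval)
  next
    show "continuous_on ({a<..<b} \<times> cbox c d) (\<lambda>(x, t). G t * fx x t)"
      unfolding cbox_interval by (rule continuous_on_weighted[OF cfx cG]) auto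
  qed (use x0 in \<open>auto simp: convex_real_interval\<close>)
  then show ?thesis
    unfolding at_within_open[OF x0 open_greaterThanLessThan] cbox_interval .
qed

lemma slab_solutionE:
  assumes "slab_solution tmin tmax \<alpha> r \<tau> a c \<mu>"
  obtains mx mxx mt mtt :: "real \<Rightarrow> real \<Rightarrow> real" where
    "\<And>x t. x \<in> {-a..a} \<Longrightarrow> t \<in> {tmin..tmax} \<Longrightarrow>
      ((\<lambda>x. \<mu> x t) has_real_derivative mx x t) (at x within {-a..a})"
    "\<And>x t. x \<in> {-a..a} \<Longrightarrow> t \<in> {tmin..tmax} \<Longrightarrow>
      ((\<lambda>x. mx x t) has_real_derivative mxx x t) (at x within {-a..a})"
    "\<And>x t. x \<in> {-a..a} \<Longrightarrow> t \<in> {tmin..tmax} \<Longrightarrow>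
      ((\<lambda>t. mt x t) has_real_derivative mtt x t) (at t within {tmin..tmax})"
    "continuous_on ({-a..a}\<times>{tmin..tmax}) (\<lambda>q. \<mu> (fst q) (snd q))"
    "continuous_on ({-a..a}\<times>{tmin..tmax}) (\<lambda>q. mx (fst q) (snd q))"
    "continuous_on ({-a..a}\<times>{tmin..tmax}) (\<lambda>q. mxx (fst q) (snd q))"
    "\<And>\<xi> \<theta>. \<xi> \<in> {-a<..<a} \<Longrightarrow> \<theta> \<in> {tmin<..<tmax} \<Longrightarrow>
      - c * mx \<xi> \<theta> - g_tau tmin \<tau> \<theta> * mxx \<xi> \<theta> - \<alpha> * mtt \<xi> \<theta>
        = r * \<mu> \<xi> \<theta> * (1 - nu \<mu> tmin tmax \<xi>)"
    "\<And>\<xi>. \<xi> \<in> {-a..a} \<Longrightarrow> mt \<xi> tmin = 0 \<and> mt \<xi> tmax = 0"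
proof -
  let ?S = "{-a..a}\<times>{tmin..tmax}"
  obtain mx mt mxx mxt mtx mtt :: "real \<Rightarrow> real \<Rightarrow> real" where
    D\<mu>: "\<forall>p\<in>?S. ((\<lambda>q. \<mu> (fst q) (snd q)) has_derivative
      (\<lambda>h. mx (fst p) (snd p) * fst h + mt (fst p) (snd p) * snd h)) (at p within ?S)"
    and Dx: "\<forall>p\<in>?S. ((\<lambda>q. mx (fst q) (snd q)) has_derivative
      (\<lambda>h. mxx (fst p) (snd p) * fst h + mxt (fst p) (snd p) * snd h)) (at p within ?S)"
    and Dt: "\<forall>p\<in>?S. ((\<lambda>q. mt (fst q) (snd q)) has_derivative
      (\<lambda>h. mtx (fst p) (snd p) * fst h + mtt (fst p) (snd p) * snd h)) (at p within ?S)"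
    and C\<mu>: "continuous_on ?S (\<lambda>q. \<mu> (fst q) (snd q))"
    and Cx: "continuous_on ?S (\<lambda>q. mx (fst q) (snd q))"
    and Cxx: "continuous_on ?S (\<lambda>q. mxx (fst q) (snd q))"
    and pde: "\<forall>\<xi>\<in>{-a<..<a}. \<forall>\<theta>\<in>{tmin<..<tmax}.
      - c * mx \<xi> \<theta> - g_tau tmin \<tau> \<theta> * mxx \<xi> \<theta> - \<alpha> * mtt \<xi> \<theta>
        = r * \<mu> \<xi> \<theta> * (1 - nu \<mu> tmin tmax \<xi>)"
    and neumann: "\<forall>\<xi>\<in>{-a..a}. mt \<xi> tmin = 0 \<and> mt \<xi> tmax = 0"
    using assms unfolding slab_solution_def Let_def by blast
  show thesis
    by (rule that[OF has_real_derivative_fst_slice[OF D\<mu>] has_real_derivative_fst_slice[OF Dx]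
          has_real_derivative_snd_slice[OF Dt] C\<mu> Cx Cxx])
       (use pde neumann in auto)
qed

lemma has_integral_derivative_neumann:
  fixes u u' :: "real \<Rightarrow> real"
  assumes "c \<le> d" and "\<And>t. t \<in> {c..d} \<Longrightarrow> (u has_real_derivative u' t) (at t within {c..d})"
    and "u c = 0" and "u d = 0"
  shows "(u' has_integral 0) {c..d}"
  using fundamental_theorem_of_calculus[of c d u u'] assms
  by (simp add: has_real_derivative_iff_has_vector_derivative)

definition weighted_mass :: "real \<Rightarrow> real \<Rightarrow> real \<Rightarrow> (real \<Rightarrow> real \<Rightarrow> real) \<Rightarrow> real \<Rightarrow> real" where
  "weighted_mass tmin tmax \<tau> \<mu> \<xi> = integral {tmin..tmax} (\<lambda>\<theta>. g_tau tmin \<tau> \<theta> * \<mu> \<xi> \<theta>)"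

lemma g_tau_bounds:
  assumes "\<tau> \<in> {0..1}" and "tmin \<le> \<theta>"
  shows "tmin \<le> g_tau tmin \<tau> \<theta>" and "g_tau tmin \<tau> \<theta> \<le> \<theta>"
proof -
  have "0 \<le> \<tau> * (\<theta> - tmin)" and "\<tau> * (\<theta> - tmin) \<le> \<theta> - tmin"
    using assms by (auto intro: mult_left_le_one_le)
  then show "tmin \<le> g_tau tmin \<tau> \<theta>" and "g_tau tmin \<tau> \<theta> \<le> \<theta>"
    unfolding g_tau_def by auto
qed

lemma weighted_mass_ode:
  assumes sol: "slab_solution tmin tmax \<alpha> r \<tau> a 0 \<mu>" and "tmin < tmax"
  obtains w' w'' :: "real \<Rightarrow> real" where
    "continuous_on {-a..a} (weighted_mass tmin tmax \<tau> \<mu>)"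
    "\<And>x. x \<in> {-a<..<a} \<Longrightarrow> (weighted_mass tmin tmax \<tau> \<mu> has_real_derivative w' x) (at x)"
    "\<And>x. x \<in> {-a<..<a} \<Longrightarrow> (w' has_real_derivative w'' x) (at x)"
    "\<And>x. x \<in> {-a<..<a} \<Longrightarrow> w'' x = - r * nu \<mu> tmin tmax x * (1 - nu \<mu> tmin tmax x)"
proof -
  let ?I = "{tmin..tmax}"
  obtain mx mxx mt mtt where dx: "\<And>x t. x \<in> {-a..a} \<Longrightarrow> t \<in> ?I \<Longrightarrow>
      ((\<lambda>x. \<mu> x t) has_real_derivative mx x t) (at x within {-a..a})"
    and dxx: "\<And>x t. x \<in> {-a..a} \<Longrightarrow> t \<in> ?I \<Longrightarrow>
      ((\<lambda>x. mx x t) has_real_derivative mxx x t) (at x within {-a..a})"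
    and dtt: "\<And>x t. x \<in> {-a..a} \<Longrightarrow> t \<in> ?I \<Longrightarrow>
      ((\<lambda>t. mt x t) has_real_derivative mtt x t) (at t within ?I)"
    and C\<mu>: "continuous_on ({-a..a}\<times>?I) (\<lambda>q. \<mu> (fst q) (snd q))"
    and Cx: "continuous_on ({-a..a}\<times>?I) (\<lambda>q. mx (fst q) (snd q))"
    and Cxx: "continuous_on ({-a..a}\<times>?I) (\<lambda>q. mxx (fst q) (snd q))"
    and pde: "\<And>\<xi> \<theta>. \<xi> \<in> {-a<..<a} \<Longrightarrow> \<theta> \<in> {tmin<..<tmax} \<Longrightarrow>
      - 0 * mx \<xi> \<theta> - g_tau tmin \<tau> \<theta> * mxx \<xi> \<theta> - \<alpha> * mtt \<xi> \<theta>
        = r * \<mu> \<xi> \<theta> * (1 - nu \<mu> tmin tmax \<xi>)"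
    and neumann: "\<And>\<xi>. \<xi> \<in> {-a..a} \<Longrightarrow> mt \<xi> tmin = 0 \<and> mt \<xi> tmax = 0"
    by (rule slab_solutionE[OF sol]) blast
  let ?G = "g_tau tmin \<tau>"
  have cG: "continuous_on ?I ?G"
    unfolding g_tau_def by (intro continuous_intros)
  define w' where "w' x = integral ?I (\<lambda>\<theta>. ?G \<theta> * mx x \<theta>)" for x
  define w'' where "w'' x = integral ?I (\<lambda>\<theta>. ?G \<theta> * mxx x \<theta>)" for x
  have "continuous_on {-a..a} (\<lambda>x. integral (cbox tmin tmax) (\<lambda>t. ?G t * \<mu> x t))"
    by (rule integral_continuous_on_param)
       (unfold cbox_interval, rule continuous_on_weighted[OF C\<mu> cG], auto)
  then have "continuous_on {-a..a} (weighted_mass tmin tmax \<tau> \<mu>)"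
    unfolding weighted_mass_def[abs_def] cbox_interval .
  moreover have "(weighted_mass tmin tmax \<tau> \<mu> has_real_derivative w' x) (at x)"
    if "x \<in> {-a<..<a}" for x
    unfolding weighted_mass_def[abs_def] w'_def
    by (rule weighted_integral_has_real_derivative[OF dx C\<mu> Cx cG that])
  moreover have "(w' has_real_derivative w'' x) (at x)" if "x \<in> {-a<..<a}" for x
    unfolding w'_def w''_def
    by (rule weighted_integral_has_real_derivative[OF dxx Cx Cxx cG that])
  moreover have "w'' x = - r * nu \<mu> tmin tmax x * (1 - nu \<mu> tmin tmax x)"
    if x: "x \<in> {-a<..<a}" for x
  proof -
    let ?N = "nu \<mu> tmin tmax x"
    have "w'' x = integral ?I (\<lambda>\<theta>. - \<alpha> * mtt x \<theta> - r * (1 - ?N) * \<mu> x \<theta>)"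
      unfolding w''_def
    proof (rule integral_spike[where S="{tmin, tmax}"])
      fix \<theta> assume "\<theta> \<in> ?I - {tmin, tmax}"
      then show "- \<alpha> * mtt x \<theta> - r * (1 - ?N) * \<mu> x \<theta> = ?G \<theta> * mxx x \<theta>"
        using pde[OF x, of \<theta>] by (auto simp: algebra_simps)
    qed auto
    also have "\<dots> = - \<alpha> * 0 - r * (1 - ?N) * ?N"
    proof (rule integral_unique, intro has_integral_diff has_integral_mult_right)
      show "((\<lambda>\<theta>. mtt x \<theta>) has_integral 0) ?I"
        using \<open>tmin < tmax\<close> dtt x neumann
        by (intro has_integral_derivative_neumann[where u="mt x"]) auto
      have "\<mu> x integrable_on ?I"
        using x by (intro integrable_continuous_interval continuous_on_slice[OF C\<mu>]) auto
      then show "((\<lambda>\<theta>. \<mu> x \<theta>) has_integral ?N) ?I"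
        unfolding nu_def by (simp add: integrable_integral)
    qed
    finally show ?thesis by (simp add: algebra_simps)
  qed
  ultimately show thesis by (rule that)
qed

lemma weighted_mass_bounds:
  assumes sol: "slab_solution tmin tmax \<alpha> r \<tau> a c \<mu>" and "\<tau> \<in> {0..1}" and x: "x \<in> {-a..a}"
  shows "0 \<le> nu \<mu> tmin tmax x"
    and "tmin * nu \<mu> tmin tmax x \<le> weighted_mass tmin tmax \<tau> \<mu> x"
    and "weighted_mass tmin tmax \<tau> \<mu> x \<le> tmax * nu \<mu> tmin tmax x"
proof -
  let ?I = "{tmin..tmax}" and ?G = "g_tau tmin \<tau>"
  have nonneg: "\<mu> x \<theta> \<ge> 0" if "\<theta> \<in> ?I" for \<theta>
    using sol x that unfolding slab_solution_def Let_def by auto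
  obtain C\<mu>: "continuous_on ({-a..a}\<times>?I) (\<lambda>q. \<mu> (fst q) (snd q))"
    using slab_solutionE[OF sol] by blast
  then have "continuous_on ?I (\<mu> x)"
    using x by (rule continuous_on_slice)
  then have int: "\<mu> x integrable_on ?I" "(\<lambda>\<theta>. k * \<mu> x \<theta>) integrable_on ?I"
    and int_G: "(\<lambda>\<theta>. ?G \<theta> * \<mu> x \<theta>) integrable_on ?I" for k
    unfolding g_tau_def by (auto intro!: integrable_continuous_interval continuous_intros)
  have G: "tmin \<le> ?G \<theta>" "?G \<theta> \<le> tmax" if "\<theta> \<in> ?I" for \<theta>
    using g_tau_bounds[OF \<open>\<tau> \<in> {0..1}\<close>, where tmin=tmin and \<theta>=\<theta>] that by auto
  show "0 \<le> nu \<mu> tmin tmax x"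
    unfolding nu_def using int nonneg by (intro integral_nonneg) auto
  have "integral ?I (\<lambda>\<theta>. tmin * \<mu> x \<theta>) \<le> weighted_mass tmin tmax \<tau> \<mu> x"
    unfolding weighted_mass_def using int int_G G nonneg
    by (intro integral_le) (auto intro!: mult_right_mono)
  then show "tmin * nu \<mu> tmin tmax x \<le> weighted_mass tmin tmax \<tau> \<mu> x"
    unfolding nu_def by simp
  have "weighted_mass tmin tmax \<tau> \<mu> x \<le> integral ?I (\<lambda>\<theta>. tmax * \<mu> x \<theta>)"
    unfolding weighted_mass_def using int int_G G nonneg
    by (intro integral_le) (auto intro!: mult_right_mono)
  then show "weighted_mass tmin tmax \<tau> \<mu> x \<le> tmax * nu \<mu> tmin tmax x"
    unfolding nu_def by simp
qed

lemma slab_solution_nu_left_end: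
  assumes "slab_solution tmin tmax \<alpha> r \<tau> a c \<mu>" and "tmin < tmax"
  shows "nu \<mu> tmin tmax (-a) = 1"
proof -
  have "nu \<mu> tmin tmax (-a) = integral {tmin..tmax} (\<lambda>\<theta>. 1 / (tmax - tmin))"
    unfolding nu_def using assms(1)
    by (intro integral_cong) (auto simp: slab_solution_def Let_def)
  then show ?thesis using assms(2) by simp
qed

lemma slab_solution_weighted_mass_right_end:
  assumes "slab_solution tmin tmax \<alpha> r \<tau> a c \<mu>"
  shows "weighted_mass tmin tmax \<tau> \<mu> a = 0"
proof -
  have "weighted_mass tmin tmax \<tau> \<mu> a = integral {tmin..tmax} (\<lambda>\<theta>. 0)"
    unfolding weighted_mass_def using assms
    by (intro integral_cong) (auto simp: slab_solution_def Let_def)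
  then show ?thesis by simp
qed

lemma slab_solution_nu_zero_lower_bound:
  assumes "0 < tmin" and "tmin < tmax" and "r > 0" and "a > 0" and \<tau>: "\<tau> \<in> {0..1}"
    and sol: "slab_solution tmin tmax \<alpha> r \<tau> a 0 \<mu>"
  shows "tmin / (2 * tmax) \<le> nu \<mu> tmin tmax 0"
proof -
  let ?w = "weighted_mass tmin tmax \<tau> \<mu>" and ?N = "nu \<mu> tmin tmax"
  define chord where "chord x = tmin * (a - x) / (2 * a)" for x
  obtain w' w'' where cont: "continuous_on {-a..a} ?w"
    and w': "\<And>x. x \<in> {-a<..<a} \<Longrightarrow> (?w has_real_derivative w' x) (at x)"
    and w'': "\<And>x. x \<in> {-a<..<a} \<Longrightarrow> (w' has_real_derivative w'' x) (at x)"
    and ode: "\<And>x. x \<in> {-a<..<a} \<Longrightarrow> w'' x = - r * ?N x * (1 - ?N x)"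
    using weighted_mass_ode[OF sol \<open>tmin < tmax\<close>] by blast
  note bounds = weighted_mass_bounds[OF sol \<tau>]
  have "0 \<le> ?w 0 - chord 0"
  proof (rule nonneg_if_concave_where_negative[where h="\<lambda>x. ?w x - chord x" and x=0
        and h'="\<lambda>x. w' x + tmin / (2 * a)" and h''=w''])
    show "continuous_on {-a..a} (\<lambda>x. ?w x - chord x)"
      unfolding chord_def by (intro continuous_intros cont) (use \<open>a > 0\<close> in auto)
    show "((\<lambda>x. ?w x - chord x) has_real_derivative w' x + tmin / (2 * a)) (at x)"
      if "x \<in> {-a<..<a}" for x
      unfolding chord_def using w'[OF that] \<open>a > 0\<close>
      by (auto intro!: derivative_eq_intros simp: field_simps)
    fix x assume x: "x \<in> {-a<..<a}"
    then show "((\<lambda>x. w' x + tmin / (2 * a)) has_real_derivative w'' x) (at x)"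
      using w'' by (auto intro!: derivative_eq_intros)
    assume "?w x - chord x < 0"
    moreover have "chord x \<le> tmin"
    proof -
      have "tmin * (a - x) \<le> tmin * (2 * a)"
        using x \<open>0 < tmin\<close> by (intro mult_left_mono) auto
      then show ?thesis
        unfolding chord_def using \<open>a > 0\<close> by (simp add: divide_simps)
    qed
    ultimately have "tmin * ?N x < tmin * 1"
      using bounds(2)[of x] x by auto
    then have "?N x \<le> 1" using \<open>0 < tmin\<close> by simp
    then show "w'' x \<le> 0"
      using ode[OF x] bounds(1)[of x] x \<open>r > 0\<close> by (simp add: mult_nonneg_nonneg)
  next
    show "0 \<le> ?w (-a) - chord (-a)"
      using bounds(2)[of "-a"] slab_solution_nu_left_end[OF sol \<open>tmin < tmax\<close>] \<open>a > 0\<close>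
      by (simp add: chord_def)
    show "0 \<le> ?w a - chord a"
      using slab_solution_weighted_mass_right_end[OF sol] by (simp add: chord_def)
  qed (use \<open>a > 0\<close> in auto)
  then have "tmin / 2 \<le> tmax * ?N 0"
    using bounds(3)[of 0] \<open>a > 0\<close> by (simp add: chord_def)
  then show ?thesis
    using \<open>0 < tmin\<close> \<open>tmin < tmax\<close> by (simp add: field_simps)
qed

theorem lemma3p4:
  fixes tmin tmax \<alpha> r :: real
  assumes "0 < tmin" and "tmin < tmax" and "\<alpha> > 0" and "r > 0"
  shows "\<exists>\<epsilon>0 > 0. \<exists>A. \<forall>a \<ge> A. \<forall>\<tau> \<in> {0..1}. \<forall>\<mu>.
           slab_solution tmin tmax \<alpha> r \<tau> a 0 \<mu> \<longrightarrow> nu \<mu> tmin tmax 0 > \<epsilon>0"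
proof (intro exI conjI allI impI ballI)
  show "tmin / (4 * tmax) > 0"
    using assms by simp
  fix a \<tau> \<mu> assume "a \<ge> 1" "\<tau> \<in> {0..1}" "slab_solution tmin tmax \<alpha> r \<tau> a 0 \<mu>"
  then have "tmin / (2 * tmax) \<le> nu \<mu> tmin tmax 0"
    using assms by (intro slab_solution_nu_zero_lower_bound) auto
  moreover have "tmin / (4 * tmax) < tmin / (2 * tmax)"
    using assms by (simp add: field_simps)
  ultimately show "tmin / (4 * tmax) < nu \<mu> tmin tmax 0"
    by linarith
qed

end
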